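(* Let $d \ge 1$ be an integer and let $\gamma, c_1, c_2 > 0$ be real numbers. There exists a constant $K$, depending only on $d, \gamma, c_1, c_2$, such that the following holds for every positive integer $N$: if $Q = N^\gamma$, $P \subseteq \mathcal{P}(Q)$ is a set of primes with $w(P) \ge c_1 \log Q$, and $S \subseteq [N]^d$ occupies fewer than $c_2$ residue classes modulo $p$ for every prime $p \in P$, then $|S| \le K$.
   Context: $[N] = \{0,1,\ldots,N\}$. $\mathcal{P}(Q)$ denotes the set of primes $p \le Q$, and for a finite set of primes $P$, $w(P) := \sum_{p \in P} \frac{\log p}{p}$. A set $S \subseteq \mathbb{Z}^d$ occupies $m$ residue classes mod $p$ if its image in $(\mathbb{Z}/p\mathbb{Z})^d$ has $m$ elements. *)

theory Defs
  imports Complex_Main "HOL-Computational_Algebra.Primes"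
begin

definition wP :: "nat set \<Rightarrow> real" where
  "wP P = (\<Sum>p\<in>P. ln (real p) / real p)"

definition box :: "nat \<Rightarrow> nat \<Rightarrow> int list set" where
  "box d N = {x. length x = d \<and> (\<forall>a\<in>set x. 0 \<le> a \<and> a \<le> int N)}"

definition res_classes :: "nat \<Rightarrow> int list set \<Rightarrow> nat" where
  "res_classes p S = card ((\<lambda>x. map (\<lambda>a. a mod int p) x) ` S)"

end

theory Submission imports Defs begin

text \<open>
  If \<open>S\<close> has at least \<open>k \<ge> c\<^sub>2\<close> points, fix \<open>k\<close> of them. For every \<open>p \<in> P\<close> two of these
  points collide mod \<open>p\<close>, so \<open>p\<close> divides some nonzero coordinate difference \<open>n \<le> N\<close>.
  The primes dividing such an \<open>n\<close> have weight at most \<open>Y + ln N / Y\<close> for any \<open>Y > 0\<close>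
  (primes \<open>\<le> Y\<close> contribute at most 1 each, larger ones at most \<open>ln p / Y\<close>, and
  \<open>\<Sum> ln p \<le> ln n\<close>). Summing over the \<open>k\<^sup>2\<close> pairs gives
  \<open>c\<^sub>1 \<gamma> ln N \<le> w(P) \<le> k\<^sup>2 (Y + ln N / Y)\<close>, and taking \<open>Y\<close> of order \<open>k\<^sup>2 / (c\<^sub>1 \<gamma>)\<close> bounds
  \<open>ln N\<close>, hence \<open>|S| \<le> (N + 1)\<^sup>d\<close>, by a constant.
\<close>

lemma prod_primes_dvd:
  fixes n :: nat
  assumes "finite A" "\<And>p. p \<in> A \<Longrightarrow> prime p \<and> p dvd n"
  shows "\<Prod>A dvd n"
  using assms
proof (induction A rule: finite_induct)
  case (insert p A)
  have "coprime p (\<Prod>A)"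
    using insert by (intro prod_coprime_right primes_coprime) auto
  with insert show ?case by (simp add: divides_mult)
qed simp

lemma sum_UN_le:
  fixes f :: "'b \<Rightarrow> 'c::ordered_comm_monoid_add"
  assumes "finite I" "\<And>i. i \<in> I \<Longrightarrow> finite (A i)" "\<And>x. 0 \<le> f x"
  shows "sum f (\<Union>i\<in>I. A i) \<le> (\<Sum>i\<in>I. sum f (A i))"
proof -
  have "(\<Union>i\<in>I. A i) = snd ` Sigma I A" by force
  moreover have "sum f (snd ` Sigma I A) \<le> sum (f \<circ> snd) (Sigma I A)"
    using assms by (intro sum_image_le) auto
  moreover have "sum (f \<circ> snd) (Sigma I A) = (\<Sum>i\<in>I. sum f (A i))"
    using assms by (simp add: sum.Sigma split_def)
  ultimately show ?thesis by simp
qed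

lemma ln_div_nonneg: "0 \<le> ln (real p) / real p"
  by (cases "p = 0") auto

lemma wP_mono: "finite B \<Longrightarrow> A \<subseteq> B \<Longrightarrow> wP A \<le> wP B"
  unfolding wP_def by (intro sum_mono2) (auto simp: ln_div_nonneg)

lemma wP_union: "finite A \<Longrightarrow> finite B \<Longrightarrow> A \<inter> B = {} \<Longrightarrow> wP (A \<union> B) = wP A + wP B"
  unfolding wP_def by (rule sum.union_disjoint)

lemma wP_UN_le:
  "finite I \<Longrightarrow> (\<And>i. i \<in> I \<Longrightarrow> finite (A i)) \<Longrightarrow> wP (\<Union>i\<in>I. A i) \<le> (\<Sum>i\<in>I. wP (A i))"
  unfolding wP_def by (intro sum_UN_le) (auto simp: ln_div_nonneg)

lemma wP_small_primes_le:
  assumes "\<And>p. p \<in> A \<Longrightarrow> prime p \<and> p \<le> Y"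
  shows "wP A \<le> real Y"
proof -
  have A: "A \<subseteq> {1..Y}"
    using assms prime_ge_1_nat by auto
  have "wP A \<le> (\<Sum>p\<in>A. 1)"
    unfolding wP_def
  proof (rule sum_mono)
    fix p assume "p \<in> A"
    then have "p \<ge> 2" using assms prime_ge_2_nat by blast
    then show "ln (real p) / real p \<le> 1" using ln_le_minus_one[of "real p"] by simp
  qed
  also have "\<dots> \<le> real Y"
    using card_mono[OF _ A] by simp
  finally show ?thesis .
qed

lemma sum_ln_prime_divisors_le:
  fixes n :: nat
  assumes "finite A" "\<And>p. p \<in> A \<Longrightarrow> prime p \<and> p dvd n" "n > 0"
  shows "(\<Sum>p\<in>A. ln (real p)) \<le> ln (real n)"
proof -
  have pos: "\<And>p. p \<in> A \<Longrightarrow> 0 < p" using assms(2) prime_gt_0_nat by blast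
  have "(\<Sum>p\<in>A. ln (real p)) = ln (\<Prod>p\<in>A. real p)"
    using assms(1) pos by (simp add: ln_prod)
  also have "(\<Prod>p\<in>A. real p) = real (\<Prod>A)"
    by simp
  also have "ln (real (\<Prod>A)) \<le> ln (real n)"
  proof (rule ln_mono)
    show "0 < real (\<Prod>A)" using pos by (simp add: prod_pos)
    show "real (\<Prod>A) \<le> real n" using dvd_imp_le[OF prod_primes_dvd[OF assms(1,2)] assms(3)]
      by (simp only: of_nat_le_iff)
  qed
  finally show ?thesis .
qed

lemma wP_large_prime_divisors_le:
  fixes n Y :: nat
  assumes "finite A" "\<And>p. p \<in> A \<Longrightarrow> prime p \<and> p dvd n \<and> Y < p" "n > 0" "Y > 0"
  shows "wP A \<le> ln (real n) / real Y"
proof -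
  have "wP A \<le> (\<Sum>p\<in>A. ln (real p) / real Y)"
    unfolding wP_def
  proof (rule sum_mono)
    fix p assume "p \<in> A"
    then have "Y < p" "prime p" using assms(2) by auto
    then show "ln (real p) / real p \<le> ln (real p) / real Y"
      using assms(4) by (intro divide_left_mono) (auto simp: prime_gt_0_nat)
  qed
  also have "\<dots> = (\<Sum>p\<in>A. ln (real p)) / real Y"
    by (simp add: sum_divide_distrib)
  also have "\<dots> \<le> ln (real n) / real Y"
    using assms by (intro divide_right_mono sum_ln_prime_divisors_le) auto
  finally show ?thesis .
qed

lemma wP_prime_divisors_le:
  fixes n Y :: nat
  assumes "finite A" "\<And>p. p \<in> A \<Longrightarrow> prime p \<and> p dvd n" "n > 0" "Y > 0"
  shows "wP A \<le> real Y + ln (real n) / real Y"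
proof -
  have "wP A = wP ({p\<in>A. p \<le> Y} \<union> {p\<in>A. Y < p})"
    by (rule arg_cong[of _ _ wP]) auto
  also have "\<dots> = wP {p\<in>A. p \<le> Y} + wP {p\<in>A. Y < p}"
    using assms(1) by (intro wP_union) auto
  also have "\<dots> \<le> real Y + ln (real n) / real Y"
    using assms by (intro add_mono wP_small_primes_le wP_large_prime_divisors_le) auto
  finally show ?thesis .
qed

definition reduce_mod :: "nat \<Rightarrow> int list \<Rightarrow> int list" where
  "reduce_mod p x = map (\<lambda>a. a mod int p) x"

lemma res_classes_eq: "res_classes p S = card (reduce_mod p ` S)"
  unfolding res_classes_def reduce_mod_def ..

lemma finite_box: "finite (box d N)"
proof -
  have "box d N = {x. set x \<subseteq> {0..int N} \<and> length x = d}"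
    unfolding box_def by auto
  then show ?thesis by (simp add: finite_lists_length_eq)
qed

lemma card_box: "card (box d N) = (N + 1) ^ d"
proof -
  have "box d N = {x. set x \<subseteq> {0..int N} \<and> length x = d}"
    unfolding box_def by auto
  then show ?thesis by (simp add: card_lists_length_eq nat_add_distrib)
qed

lemma box_distinct_coordinate:
  assumes "s \<in> box d N" "t \<in> box d N" "s \<noteq> t"
  obtains i where "i < d" "0 < nat \<bar>s ! i - t ! i\<bar>" "nat \<bar>s ! i - t ! i\<bar> \<le> N"
proof -
  have len: "length s = d" "length t = d" using assms unfolding box_def by auto
  then obtain i where i: "i < d" "s ! i \<noteq> t ! i"
    using assms(3) nth_equalityI by metis
  then have "s ! i \<in> {0..int N}" "t ! i \<in> {0..int N}"
    using assms len nth_mem unfolding box_def by fastforce+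
  with i show thesis by (intro that[of i]) auto
qed

lemma reduce_mod_eq_imp_dvd:
  assumes "reduce_mod p s = reduce_mod p t" "i < length s"
  shows "int p dvd s ! i - t ! i"
proof -
  have "length t = length s"
    using arg_cong[OF assms(1), of length] unfolding reduce_mod_def by simp
  then have "s ! i mod int p = t ! i mod int p"
    using arg_cong[OF assms(1), of "\<lambda>l. l ! i"] assms(2) unfolding reduce_mod_def by simp
  then show ?thesis by (simp add: mod_eq_dvd_iff)
qed

lemma wP_collision_primes_le:
  assumes "Y > 0" "finite P" "\<forall>p\<in>P. prime p" "s \<in> box d N" "t \<in> box d N" "s \<noteq> t"
  shows "wP {p\<in>P. reduce_mod p s = reduce_mod p t} \<le> real Y + ln (real N) / real Y"
proof -
  obtain i where i: "i < d" and n: "0 < nat \<bar>s ! i - t ! i\<bar>" "nat \<bar>s ! i - t ! i\<bar> \<le> N"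
    using box_distinct_coordinate[OF assms(4-6)] .
  have "i < length s" using i assms(4) unfolding box_def by simp
  then have "wP {p\<in>P. reduce_mod p s = reduce_mod p t} \<le> real Y + ln (nat \<bar>s ! i - t ! i\<bar>) / real Y"
    using assms(1-3) n(1) by (intro wP_prime_divisors_le) (auto intro: reduce_mod_eq_imp_dvd)
  also have "\<dots> \<le> real Y + ln (real N) / real Y"
    using n by (intro add_left_mono divide_right_mono) auto
  finally show ?thesis .
qed

lemma wP_le_if_few_residue_classes:
  assumes Y: "Y > 0" and P: "finite P" "\<forall>p\<in>P. prime p" and T: "T \<subseteq> box d N"
    and N: "N > 0" and few: "\<forall>p\<in>P. card (reduce_mod p ` T) < card T"
  shows "wP P \<le> real (card T) ^ 2 * (real Y + ln (real N) / real Y)"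
proof -
  define Pairs where "Pairs = T \<times> T - Id"
  define coll where "coll = (\<lambda>x. {p\<in>P. reduce_mod p (fst x) = reduce_mod p (snd x)})"
  have finT: "finite T" using T finite_box finite_subset by blast
  have finPairs: "finite Pairs" using finT unfolding Pairs_def by simp
  have "P \<subseteq> (\<Union>x\<in>Pairs. coll x)"
  proof
    fix p assume "p \<in> P"
    then obtain s t where "s \<in> T" "t \<in> T" "s \<noteq> t" "reduce_mod p s = reduce_mod p t"
      using pigeonhole few unfolding inj_on_def by blast
    with \<open>p \<in> P\<close> show "p \<in> (\<Union>x\<in>Pairs. coll x)"
      unfolding Pairs_def coll_def by (intro UN_I[of "(s, t)"]) auto
  qed
  then have "wP P \<le> wP (\<Union>x\<in>Pairs. coll x)"
    using P finPairs by (intro wP_mono finite_UN_I) (auto simp: coll_def)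
  also have "\<dots> \<le> (\<Sum>x\<in>Pairs. wP (coll x))"
    using finPairs P by (intro wP_UN_le) (auto simp: coll_def)
  also have "\<dots> \<le> (\<Sum>x\<in>Pairs. real Y + ln (real N) / real Y)"
    using Y P T by (intro sum_mono) (auto simp: Pairs_def coll_def intro!: wP_collision_primes_le)
  also have "\<dots> \<le> real (card T) ^ 2 * (real Y + ln (real N) / real Y)"
  proof -
    have "card Pairs \<le> card (T \<times> T)"
      using finT unfolding Pairs_def by (intro card_mono) auto
    then have "real (card Pairs) \<le> real (card T) ^ 2"
      by (simp add: card_cartesian_product power2_eq_square flip: of_nat_mult)
    then show ?thesis using N by (simp add: mult_right_mono)
  qed
  finally show ?thesis .
qed

lemma ln_le_from_weight_bounds:
  fixes a k L :: real and Y :: nat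
  assumes "a > 0" "L \<ge> 0" "2 * k ^ 2 / a \<le> real Y" "Y > 0"
    and "a * L \<le> k ^ 2 * (real Y + L / real Y)"
  shows "L \<le> 2 * k ^ 2 * real Y / a"
proof -
  have "k ^ 2 / real Y \<le> a / 2" using assms(1,3,4) by (simp add: field_simps)
  then have "k ^ 2 / real Y * L \<le> a / 2 * L" using assms(2) by (rule mult_right_mono)
  moreover have "a * L \<le> k ^ 2 * real Y + k ^ 2 / real Y * L"
    using assms(5) by (simp add: distrib_left)
  ultimately have "a * L / 2 \<le> k ^ 2 * real Y" by linarith
  then show ?thesis using assms(1) by (simp add: field_simps)
qed

lemma card_le_if_few_residue_classes:
  fixes a :: real
  assumes a: "a > 0" and Y: "Y > 0" "2 * real k ^ 2 / a \<le> real Y" and N: "N > 0"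
    and P: "finite P" "\<forall>p\<in>P. prime p" "a * ln (real N) \<le> wP P"
    and S: "S \<subseteq> box d N" and few: "\<forall>p\<in>P. res_classes p S < k"
  shows "real (card S) \<le> max (real k) ((exp (2 * real k ^ 2 * real Y / a) + 1) ^ d)"
proof (cases "card S < k")
  case False
  then obtain T where T: "T \<subseteq> S" "card T = k"
    by (meson not_less obtain_subset_with_card_n)
  have "\<forall>p\<in>P. card (reduce_mod p ` T) < card T"
  proof
    fix p assume "p \<in> P"
    have "card (reduce_mod p ` T) \<le> res_classes p S"
      unfolding res_classes_eq using finite_subset[OF S finite_box] T(1)
      by (intro card_mono finite_imageI image_mono)
    with few \<open>p \<in> P\<close> T(2) show "card (reduce_mod p ` T) < card T" by fastforce
  qed
  then have "wP P \<le> real k ^ 2 * (real Y + ln (real N) / real Y)"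
    using wP_le_if_few_residue_classes[of Y P T d N] P S T N Y by auto
  then have "ln (real N) \<le> 2 * real k ^ 2 * real Y / a"
    using a N Y P(3) by (intro ln_le_from_weight_bounds) auto
  then have "real N \<le> exp (2 * real k ^ 2 * real Y / a)"
    using N by (metis exp_le_cancel_iff exp_ln of_nat_0_less_iff)
  moreover have "card S \<le> (N + 1) ^ d"
    using S by (metis card_box card_mono finite_box)
  then have "real (card S) \<le> (real N + 1) ^ d"
    by (metis of_nat_1 of_nat_add of_nat_le_iff of_nat_power)
  ultimately show ?thesis
    by (smt (verit) of_nat_0_le_iff power_mono)
qed simp

theorem lemma3p2:
  fixes d :: nat and \<gamma> c1 c2 :: real
  assumes "d \<ge> 1" and "\<gamma> > 0" and "c1 > 0" and "c2 > 0"
  shows "\<exists>K::real. \<forall>(N::nat) (Q::real) (P::nat set) (S::int list set).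
           N > 0 \<longrightarrow> Q = real N powr \<gamma> \<longrightarrow>
           (\<forall>p\<in>P. prime p \<and> real p \<le> Q) \<longrightarrow>
           wP P \<ge> c1 * ln Q \<longrightarrow>
           S \<subseteq> box d N \<longrightarrow>
           (\<forall>p\<in>P. real (res_classes p S) < c2) \<longrightarrow>
           real (card S) \<le> K"
proof -
  define k where "k = nat \<lceil>c2\<rceil>"
  define a where "a = c1 * \<gamma>"
  define Y :: nat where "Y = nat \<lceil>2 * real k ^ 2 / a\<rceil> + 1"
  have a: "a > 0" using assms unfolding a_def by simp
  have Y: "Y > 0" "2 * real k ^ 2 / a \<le> real Y" unfolding Y_def by linarith+
  show ?thesis
  proof (intro exI allI impI)
    fix N :: nat and Q :: real and P :: "nat set" and S :: "int list set"
    assume N: "N > 0" and Q: "Q = real N powr \<gamma>"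
      and P: "\<forall>p\<in>P. prime p \<and> real p \<le> Q" and wP: "wP P \<ge> c1 * ln Q"
      and S: "S \<subseteq> box d N" and res: "\<forall>p\<in>P. real (res_classes p S) < c2"
    have "finite P"
      using P by (intro finite_subset[of P "{..nat \<lceil>Q\<rceil>}"]) (auto simp: le_nat_iff le_ceiling_iff)
    moreover have "a * ln (real N) \<le> wP P"
      using wP N unfolding Q a_def by (simp add: ln_powr mult_ac)
    moreover have "\<forall>p\<in>P. res_classes p S < k"
      using res unfolding k_def by (metis of_nat_less_iff order_less_le_trans real_nat_ceiling_ge)
    ultimately show "real (card S) \<le> max (real k) ((exp (2 * real k ^ 2 * real Y / a) + 1) ^ d)"
      using card_le_if_few_residue_classes[OF a Y N] P S by blast
  qed
qed

end
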